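(* Fix $t\ge1$. Let $\widehat g_{t-1}$, $b_t$, $r_t$ be random vectors in $\mathbb{R}^d$, $B_t$ a random $d\times d$ matrix, $\eta_{t-1}>0$ and $\lambda_t>0$, with finite second moments as needed. Define $u_{t-1}=\widehat g_{t-1}/\|\widehat g_{t-1}\|_2$ if $\widehat g_{t-1}\ne0$ and $u_{t-1}=0$ otherwise, and $P^\perp_{t-1}=I-u_{t-1}u_{t-1}^\top$. Assume \[ b_t=\eta_{t-1}B_t\widehat g_{t-1}+r_t \] and \[ \widehat g_{t-1}^\top B_t\widehat g_{t-1}\ge\lambda_t\|\widehat g_{t-1}\|_2^2\quad\text{almost surely}. \] Let $b_t^\perp=P^\perp_{t-1}b_t$. Then \[ \mathbb{E}\|b_t^\perp\|_2^2\le\mathbb{E}\|b_t\|_2^2-\eta_{t-1}^2\lambda_t^2\,\mathbb{E}\|\widehat g_{t-1}\|_2^2+2\eta_{t-1}\lambda_t\,\mathbb{E}\big[\|\widehat g_{t-1}\|_2\|r_t\|_2\big]. \] In particular, if $\mathbb{E}\|r_t\|_2^2\le\epsilon_t^2$ for some $\epsilon_t\ge0$, then \[ \mathbb{E}\|b_t^\perp\|_2^2\le\mathbb{E}\|b_t\|_2^2-\eta_{t-1}^2\lambda_t^2\,\mathbb{E}\|\widehat g_{t-1}\|_2^2+2\eta_{t-1}\lambda_t\,\epsilon_t\sqrt{\mathbb{E}\|\widehat g_{t-1}\|_2^2}. \]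
   Context: Interpretation: $\widehat g_{t-1}$ is the previous stochastic gradient in an asynchronous stochastic gradient iteration, $b_t$ is the staleness-induced bias of the current gradient (linearized with operator $B_t$, stepsize $\eta_{t-1}$, and remainder $r_t$), and $b_t^\perp$ is the bias after projecting out the previous-gradient direction. *)

theory Defs
  imports "HOL-Probability.Probability"
begin

definition unit_dir :: "real^'d \<Rightarrow> real^'d" where
  "unit_dir g = (if g = 0 then 0 else (1 / norm g) *\<^sub>R g)"

definition outer :: "real^'d \<Rightarrow> real^'d \<Rightarrow> real^'d^'d" where
  "outer u v = (\<chi> i j. u $ i * v $ j)"

definition perp_proj :: "real^'d \<Rightarrow> real^'d^'d" where
  "perp_proj g = mat 1 - outer (unit_dir g) (unit_dir g)"

end

theory Submission
  imports Defs
begin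

text \<open>Write \<open>u\<close> for the unit direction of \<open>g\<close> and \<open>c = u \<bullet> b\<close>. Removing the \<open>u\<close>-component
  of \<open>b\<close> lowers its squared norm by exactly \<open>c\<^sup>2\<close>, and the curvature hypothesis on \<open>B\<close> together
  with Cauchy-Schwarz gives \<open>c \<ge> \<eta> \<lambda> \<parallel>g\<parallel> - \<parallel>r\<parallel>\<close>, hence
  \<open>c\<^sup>2 \<ge> \<eta>\<^sup>2 \<lambda>\<^sup>2 \<parallel>g\<parallel>\<^sup>2 - 2 \<eta> \<lambda> \<parallel>g\<parallel> \<parallel>r\<parallel>\<close> pointwise. Integrating gives the first bound; the second
  follows from the Cauchy-Schwarz inequality \<open>E[\<parallel>g\<parallel> \<parallel>r\<parallel>] \<le> sqrt (E \<parallel>g\<parallel>\<^sup>2) sqrt (E \<parallel>r\<parallel>\<^sup>2)\<close>.\<close>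

lemma outer_mult_vec: "outer u v *v x = (v \<bullet> x) *\<^sub>R u"
  by (simp add: vec_eq_iff outer_def matrix_vector_mult_def inner_vec_def sum_distrib_left
      algebra_simps)

lemma perp_proj_mult_vec: "perp_proj g *v v = v - (unit_dir g \<bullet> v) *\<^sub>R unit_dir g"
  by (simp add: perp_proj_def matrix_vector_mult_diff_rdistrib outer_mult_vec)

lemma norm_unit_dir: "g \<noteq> 0 \<Longrightarrow> norm (unit_dir g) = 1"
  by (simp add: unit_dir_def)

lemma unit_dir_inner_mult_norm: "(unit_dir g \<bullet> v) * norm g = g \<bullet> v"
  by (simp add: unit_dir_def)

lemma norm_perp_proj_mult_vec_sq:
  "(norm (perp_proj g *v v))\<^sup>2 = (norm v)\<^sup>2 - (unit_dir g \<bullet> v)\<^sup>2"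
proof (cases "g = 0")
  case True
  then show ?thesis by (simp add: perp_proj_mult_vec unit_dir_def)
next
  case False
  then have "unit_dir g \<bullet> unit_dir g = 1"
    using norm_unit_dir by (simp add: norm_eq_sqrt_inner)
  then show ?thesis
    unfolding perp_proj_mult_vec power2_norm_eq_inner
    by (simp add: inner_diff_left inner_diff_right inner_commute power2_eq_square)
qed

lemma square_ge_of_ge_diff:
  fixes a s c :: real
  assumes "0 \<le> a" "0 \<le> s" "a - s \<le> c"
  shows "a\<^sup>2 - 2 * a * s \<le> c\<^sup>2"
proof (cases "a \<le> s")
  case True
  then have "a\<^sup>2 \<le> a * s" using \<open>0 \<le> a\<close> by (simp add: power2_eq_square mult_left_mono)
  then show ?thesis
    using mult_nonneg_nonneg[OF assms(1,2)] zero_le_power2[of c] by linarith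
next
  case False
  then have "(a - s)\<^sup>2 \<le> c\<^sup>2" using assms by (intro power_mono) auto
  then show ?thesis
    using zero_le_power2[of s] unfolding power2_diff by linarith
qed

lemma norm_perp_proj_bias_sq_le:
  fixes g b r :: "real^'d" and B :: "real^'d^'d" and eta lam :: real
  assumes "0 \<le> eta" "0 \<le> lam"
    and bias: "b = eta *\<^sub>R (B *v g) + r"
    and curv: "lam * (norm g)\<^sup>2 \<le> g \<bullet> (B *v g)"
  shows "(norm (perp_proj g *v b))\<^sup>2
    \<le> (norm b)\<^sup>2 - eta\<^sup>2 * lam\<^sup>2 * (norm g)\<^sup>2 + 2 * eta * lam * (norm g * norm r)"
proof -
  define c where "c = unit_dir g \<bullet> b"
  have "eta * lam * (norm g)\<^sup>2 - norm g * norm r \<le> eta * (g \<bullet> (B *v g)) + g \<bullet> r"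
    using mult_left_mono[OF curv \<open>0 \<le> eta\<close>] norm_cauchy_schwarz[of "-g" r]
    by (simp add: mult.assoc)
  also have "\<dots> = c * norm g"
    unfolding c_def unit_dir_inner_mult_norm bias by (simp add: inner_add_right)
  finally have scaled: "(eta * lam * norm g - norm r) * norm g \<le> c * norm g"
    by (simp add: power2_eq_square algebra_simps)
  have "eta * lam * norm g - norm r \<le> c"
  proof (cases "g = 0")
    case True
    then show ?thesis by (simp add: c_def unit_dir_def)
  next
    case False
    then show ?thesis using scaled by simp
  qed
  then have "eta\<^sup>2 * lam\<^sup>2 * (norm g)\<^sup>2 - 2 * eta * lam * (norm g * norm r) \<le> c\<^sup>2"
    using square_ge_of_ge_diff[of "eta * lam * norm g" "norm r" c] assms(1,2)
    by (simp add: power_mult_distrib mult.assoc)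
  moreover have "(norm (perp_proj g *v b))\<^sup>2 = (norm b)\<^sup>2 - c\<^sup>2"
    unfolding c_def by (rule norm_perp_proj_mult_vec_sq)
  ultimately show ?thesis by linarith
qed

lemma integrable_mult_of_square_integrable:
  fixes f h :: "'a \<Rightarrow> real"
  assumes "f \<in> borel_measurable M" "h \<in> borel_measurable M"
    and "integrable M (\<lambda>x. (f x)\<^sup>2)" "integrable M (\<lambda>x. (h x)\<^sup>2)"
  shows "integrable M (\<lambda>x. f x * h x)"
proof (rule Bochner_Integration.integrable_bound)
  show "integrable M (\<lambda>x. (f x)\<^sup>2 + (h x)\<^sup>2)" using assms by auto
  show "(\<lambda>x. f x * h x) \<in> borel_measurable M" using assms by measurable
  show "AE x in M. norm (f x * h x) \<le> norm ((f x)\<^sup>2 + (h x)\<^sup>2)"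
  proof (rule AE_I2)
    fix x
    have "2 * \<bar>f x\<bar> * \<bar>h x\<bar> \<le> (f x)\<^sup>2 + (h x)\<^sup>2"
      using sum_squares_bound[of "\<bar>f x\<bar>" "\<bar>h x\<bar>"] by simp
    then have "\<bar>f x\<bar> * \<bar>h x\<bar> \<le> (f x)\<^sup>2 + (h x)\<^sup>2"
      using mult_nonneg_nonneg[OF abs_ge_zero abs_ge_zero, of "f x" "h x"] by linarith
    then show "norm (f x * h x) \<le> norm ((f x)\<^sup>2 + (h x)\<^sup>2)"
      by (simp add: abs_mult)
  qed
qed

lemma Cauchy_Schwarz_integral:
  fixes f h :: "'a \<Rightarrow> real"
  assumes [measurable]: "f \<in> borel_measurable M" "h \<in> borel_measurable M"
    and "\<And>x. 0 \<le> f x" "\<And>x. 0 \<le> h x"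
    and "integrable M (\<lambda>x. (f x)\<^sup>2)" "integrable M (\<lambda>x. (h x)\<^sup>2)"
  shows "(\<integral>x. f x * h x \<partial>M) \<le> sqrt (\<integral>x. (f x)\<^sup>2 \<partial>M) * sqrt (\<integral>x. (h x)\<^sup>2 \<partial>M)"
proof -
  have fh: "integrable M (\<lambda>x. f x * h x)"
    using assms by (intro integrable_mult_of_square_integrable)
  have "ennreal ((\<integral>x. f x * h x \<partial>M)\<^sup>2) = (\<integral>\<^sup>+x. ennreal (f x) * ennreal (h x) \<partial>M)\<^sup>2"
    using assms fh by (simp add: nn_integral_eq_integral ennreal_power ennreal_mult'[symmetric])
  also have "\<dots> \<le> (\<integral>\<^sup>+x. ennreal (f x) ^ 2 \<partial>M) * (\<integral>\<^sup>+x. ennreal (h x) ^ 2 \<partial>M)"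
    by (rule Cauchy_Schwarz_nn_integral) auto
  also have "\<dots> = ennreal ((\<integral>x. (f x)\<^sup>2 \<partial>M) * (\<integral>x. (h x)\<^sup>2 \<partial>M))"
    using assms by (simp add: nn_integral_eq_integral ennreal_power ennreal_mult)
  finally have "(\<integral>x. f x * h x \<partial>M)\<^sup>2 \<le> (\<integral>x. (f x)\<^sup>2 \<partial>M) * (\<integral>x. (h x)\<^sup>2 \<partial>M)"
    by (simp add: ennreal_le_iff)
  then show ?thesis
    by (simp add: real_le_rsqrt real_sqrt_mult[symmetric])
qed

lemma integral_norm_perp_proj_bias_sq_le:
  fixes g b r :: "'a \<Rightarrow> real^'d" and B :: "'a \<Rightarrow> real^'d^'d" and eta lam :: real
  assumes [measurable]: "g \<in> borel_measurable M" "r \<in> borel_measurable M"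
    and "integrable M (\<lambda>x. (norm (g x))\<^sup>2)" "integrable M (\<lambda>x. (norm (b x))\<^sup>2)"
    and "integrable M (\<lambda>x. (norm (r x))\<^sup>2)"
    and "0 \<le> eta" "0 \<le> lam"
    and "AE x in M. b x = eta *\<^sub>R (B x *v g x) + r x"
    and "AE x in M. lam * (norm (g x))\<^sup>2 \<le> g x \<bullet> (B x *v g x)"
  shows "(\<integral>x. (norm (perp_proj (g x) *v b x))\<^sup>2 \<partial>M)
    \<le> (\<integral>x. (norm (b x))\<^sup>2 \<partial>M) - eta\<^sup>2 * lam\<^sup>2 * (\<integral>x. (norm (g x))\<^sup>2 \<partial>M)
      + 2 * eta * lam * (\<integral>x. norm (g x) * norm (r x) \<partial>M)"
proof -
  have gr: "integrable M (\<lambda>x. norm (g x) * norm (r x))"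
    using assms(3,5) by (intro integrable_mult_of_square_integrable) auto
  define bound where "bound x = (norm (b x))\<^sup>2 - eta\<^sup>2 * lam\<^sup>2 * (norm (g x))\<^sup>2
    + 2 * eta * lam * (norm (g x) * norm (r x))" for x
  have le_bound: "AE x in M. (norm (perp_proj (g x) *v b x))\<^sup>2 \<le> bound x"
    using assms(8,9)
  proof eventually_elim
    case (elim x)
    then show ?case
      unfolding bound_def using assms(6,7) by (intro norm_perp_proj_bias_sq_le)
  qed
  have "(\<integral>x. (norm (perp_proj (g x) *v b x))\<^sup>2 \<partial>M) \<le> (\<integral>x. bound x \<partial>M)"
  proof (rule integral_mono_AE'[OF _ le_bound])
    show "integrable M bound" unfolding bound_def using assms(3,4) gr by auto
    show "AE x in M. 0 \<le> bound x"
      using le_bound by eventually_elim (rule order_trans[OF zero_le_power2])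
  qed
  also have "\<dots> = (\<integral>x. (norm (b x))\<^sup>2 \<partial>M) - eta\<^sup>2 * lam\<^sup>2 * (\<integral>x. (norm (g x))\<^sup>2 \<partial>M)
      + 2 * eta * lam * (\<integral>x. norm (g x) * norm (r x) \<partial>M)"
    unfolding bound_def using assms(3,4) gr by simp
  finally show ?thesis .
qed

theorem propositionF1:
  fixes M :: "'s measure"
    and g b r :: "'s \<Rightarrow> real^'d"
    and B :: "'s \<Rightarrow> real^'d^'d"
    and eta lam :: real
  assumes "prob_space M"
    and "g \<in> borel_measurable M" and "b \<in> borel_measurable M"
    and "r \<in> borel_measurable M" and "B \<in> borel_measurable M"
    and "integrable M (\<lambda>x. (norm (g x))\<^sup>2)"
    and "integrable M (\<lambda>x. (norm (b x))\<^sup>2)"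
    and "integrable M (\<lambda>x. (norm (r x))\<^sup>2)"
    and "eta > 0" and "lam > 0"
    and "AE x in M. b x = eta *\<^sub>R (B x *v g x) + r x"
    and "AE x in M. g x \<bullet> (B x *v g x) \<ge> lam * (norm (g x))\<^sup>2"
  shows "((\<integral>x. (norm (perp_proj (g x) *v b x))\<^sup>2 \<partial>M)
           \<le> (\<integral>x. (norm (b x))\<^sup>2 \<partial>M) - eta\<^sup>2 * lam\<^sup>2 * (\<integral>x. (norm (g x))\<^sup>2 \<partial>M)
             + 2 * eta * lam * (\<integral>x. norm (g x) * norm (r x) \<partial>M))
    \<and> (\<forall>eps::real. eps \<ge> 0 \<longrightarrow> (\<integral>x. (norm (r x))\<^sup>2 \<partial>M) \<le> eps\<^sup>2 \<longrightarrow>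
           (\<integral>x. (norm (perp_proj (g x) *v b x))\<^sup>2 \<partial>M)
           \<le> (\<integral>x. (norm (b x))\<^sup>2 \<partial>M) - eta\<^sup>2 * lam\<^sup>2 * (\<integral>x. (norm (g x))\<^sup>2 \<partial>M)
             + 2 * eta * lam * eps * sqrt (\<integral>x. (norm (g x))\<^sup>2 \<partial>M))"
proof -
  have first: "(\<integral>x. (norm (perp_proj (g x) *v b x))\<^sup>2 \<partial>M)
    \<le> (\<integral>x. (norm (b x))\<^sup>2 \<partial>M) - eta\<^sup>2 * lam\<^sup>2 * (\<integral>x. (norm (g x))\<^sup>2 \<partial>M)
      + 2 * eta * lam * (\<integral>x. norm (g x) * norm (r x) \<partial>M)"
    using assms by (intro integral_norm_perp_proj_bias_sq_le) auto
  have "(\<integral>x. norm (g x) * norm (r x) \<partial>M) \<le> eps * sqrt (\<integral>x. (norm (g x))\<^sup>2 \<partial>M)"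
    if "0 \<le> eps" "(\<integral>x. (norm (r x))\<^sup>2 \<partial>M) \<le> eps\<^sup>2" for eps
  proof -
    have "(\<integral>x. norm (g x) * norm (r x) \<partial>M)
        \<le> sqrt (\<integral>x. (norm (g x))\<^sup>2 \<partial>M) * sqrt (\<integral>x. (norm (r x))\<^sup>2 \<partial>M)"
      using assms(2,4,6,8) by (intro Cauchy_Schwarz_integral) auto
    also have "\<dots> \<le> sqrt (\<integral>x. (norm (g x))\<^sup>2 \<partial>M) * eps"
      using that by (intro mult_left_mono real_le_lsqrt) auto
    finally show ?thesis by (simp add: mult.commute)
  qed
  with first \<open>eta > 0\<close> \<open>lam > 0\<close> show ?thesis
    by (smt (verit) mult_left_mono mult.assoc)
qed

end
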